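(* Let $N=N_n\to\infty$ and $m=m_n\to\infty$ be sequences of positive integers, and let $\delta_n,\varepsilon_n$ be positive sequences converging to $0$ with $\varepsilon_n=o(\delta_n)$. For every $n$ there is a coupling of $M'=M'_n\overset{d}{=}M(\lfloor N(1+\varepsilon_n)\rfloor,m)$ and $M=M_n\overset{d}{=}M(N,m)$ such that $M\le M'$ almost surely and $\mathbb P(M'-\delta_n\mathbb E\,M'\le M)\to1$. If, additionally, $\mathbb P(M'>\delta_n^{-1})\to0$, then $\mathbb P(M=M')\to1$.
   Context: $M(N,m)$ is the maximum number of balls in a bin after $N$ balls are thrown independently and uniformly at random into $m$ bins. *)

theory Defs
  imports "HOL-Probability.Probability" "HOL-Library.Landau_Symbols"
begin

definition balls_pmf :: "nat \<Rightarrow> nat \<Rightarrow> (nat \<Rightarrow> nat) pmf" where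
  "balls_pmf N m = Pi_pmf {..<N} 0 (\<lambda>_. pmf_of_set {..<m})"

definition max_load :: "nat \<Rightarrow> nat \<Rightarrow> (nat \<Rightarrow> nat) \<Rightarrow> nat" where
  "max_load N m f = Max ((\<lambda>j. card {i\<in>{..<N}. f i = j}) ` {..<m})"

definition maxload_pmf :: "nat \<Rightarrow> nat \<Rightarrow> nat pmf" where
  "maxload_pmf N m = map_pmf (max_load N m) (balls_pmf N m)"

end

theory Submission
  imports Defs "HOL-Combinatorics.Permutations"
begin

text \<open>Throw \<open>N' = \<lfloor>N(1 + \<epsilon>)\<rfloor>\<close> balls and let \<open>M'\<close> be the maximum load of all of them, \<open>M\<close> that of
  the first \<open>N\<close>. Then \<open>M \<le> M' \<le> M + R\<close>, where \<open>R\<close> counts the last \<open>N' - N\<close> balls that land in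
  the bin which is heaviest at the end. The balls are exchangeable, so each of them lies in that
  bin with the same probability, even jointly with \<open>M'\<close>; hence
  \<open>N' * E[R g(M')] = (N' - N) * E[M' g(M')]\<close> for every weight \<open>g\<close>.
  With \<open>g = 1\<close>, Markov's inequality gives \<open>P(M < M' - \<delta> E M') \<le> \<epsilon>/\<delta>\<close>; with
  \<open>g = [M' \<le> 1/\<delta>]\<close> it gives \<open>P(M \<noteq> M' \<and> M' \<le> 1/\<delta>) \<le> \<epsilon>/\<delta>\<close>.\<close>

definition load :: "nat \<Rightarrow> (nat \<Rightarrow> nat) \<Rightarrow> nat \<Rightarrow> nat" where
  "load N f j = card {i\<in>{..<N}. f i = j}"

lemma max_load_eq_Max_load: "max_load N m f = Max (load N f ` {..<m})"
  unfolding max_load_def load_def ..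

lemma load_le_max_load: "j < m \<Longrightarrow> load N f j \<le> max_load N m f"
  unfolding max_load_eq_Max_load by (intro Max_ge) auto

text \<open>Ties are broken by the least index, so the bin depends on the loads only and is invariant
  under relabelling the balls.\<close>
definition heaviest_bin :: "nat \<Rightarrow> nat \<Rightarrow> (nat \<Rightarrow> nat) \<Rightarrow> nat" where
  "heaviest_bin N m f = (LEAST j. j < m \<and> load N f j = max_load N m f)"

lemma heaviest_bin:
  assumes "0 < m"
  shows "heaviest_bin N m f < m" and "load N f (heaviest_bin N m f) = max_load N m f"
proof -
  have "max_load N m f \<in> load N f ` {..<m}"
    unfolding max_load_eq_Max_load using assms by (intro Max_in) auto
  then obtain j where "j < m \<and> load N f j = max_load N m f" by auto
  then have "heaviest_bin N m f < m \<and> load N f (heaviest_bin N m f) = max_load N m f"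
    unfolding heaviest_bin_def by (rule LeastI)
  then show "heaviest_bin N m f < m" and "load N f (heaviest_bin N m f) = max_load N m f"
    by auto
qed

lemma load_add:
  assumes "N \<le> N'"
  shows "load N' f j = load N f j + card {i\<in>{N..<N'}. f i = j}"
proof -
  have "{i\<in>{..<N'}. f i = j} = {i\<in>{..<N}. f i = j} \<union> {i\<in>{N..<N'}. f i = j}"
    using assms by auto
  moreover have "card ({i\<in>{..<N}. f i = j} \<union> {i\<in>{N..<N'}. f i = j})
      = card {i\<in>{..<N}. f i = j} + card {i\<in>{N..<N'}. f i = j}"
    by (rule card_Un_disjoint) auto
  ultimately show ?thesis
    unfolding load_def by simp
qed

lemma max_load_mono:
  assumes "N \<le> N'" "0 < m"
  shows "max_load N m f \<le> max_load N' m f"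
proof -
  have "max_load N m f = load N f (heaviest_bin N m f)"
    using heaviest_bin[OF assms(2)] by simp
  also have "\<dots> \<le> load N' f (heaviest_bin N m f)"
    using load_add[OF assms(1)] by simp
  also have "\<dots> \<le> max_load N' m f"
    using heaviest_bin[OF assms(2)] by (intro load_le_max_load)
  finally show ?thesis .
qed

definition late_hits :: "nat \<Rightarrow> nat \<Rightarrow> nat \<Rightarrow> (nat \<Rightarrow> nat) \<Rightarrow> nat" where
  "late_hits N N' m f = card {i\<in>{N..<N'}. f i = heaviest_bin N' m f}"

lemma max_load_le_add_late_hits:
  assumes "N \<le> N'" "0 < m"
  shows "max_load N' m f \<le> max_load N m f + late_hits N N' m f"
proof -
  have "max_load N' m f = load N f (heaviest_bin N' m f) + late_hits N N' m f"
    using heaviest_bin[OF assms(2)] load_add[OF assms(1)] unfolding late_hits_def by metis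
  also have "load N f (heaviest_bin N' m f) \<le> max_load N m f"
    using heaviest_bin[OF assms(2)] by (intro load_le_max_load)
  finally show ?thesis by simp
qed

lemma of_nat_load: "of_nat (load N f j) = (\<Sum>i<N. of_bool (f i = j))"
  unfolding load_def by (simp add: sum_of_bool_eq Int_def)

lemma load_permute:
  assumes "\<pi> permutes {..<N}"
  shows "load N (f \<circ> \<pi>) j = load N f j"
proof -
  have "real (load N (f \<circ> \<pi>) j) = real (load N f j)"
    using sum.permute[OF assms, of "\<lambda>i. of_bool (f i = j)"]
    unfolding of_nat_load o_def by (rule sym)
  then show ?thesis by simp
qed

lemma max_load_permute: "\<pi> permutes {..<N} \<Longrightarrow> max_load N m (f \<circ> \<pi>) = max_load N m f"
  by (simp add: max_load_eq_Max_load load_permute)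

lemma heaviest_bin_permute: "\<pi> permutes {..<N} \<Longrightarrow> heaviest_bin N m (f \<circ> \<pi>) = heaviest_bin N m f"
  by (simp add: heaviest_bin_def load_permute max_load_permute)

lemma balls_pmf_permute:
  assumes "\<pi> permutes {..<N}"
  shows "map_pmf (\<lambda>f. f \<circ> \<pi>) (balls_pmf N m) = balls_pmf N m"
  unfolding balls_pmf_def
  by (rule Pi_pmf_bij_betw[symmetric]) (use assms in \<open>auto simp: permutes_imp_bij permutes_not_in\<close>)

lemma finite_set_balls_pmf: "0 < m \<Longrightarrow> finite (set_pmf (balls_pmf N m))"
  unfolding balls_pmf_def by (auto simp: set_Pi_pmf lessThan_empty_iff intro!: finite_PiE_dflt)

lemma integrable_balls_pmf [simp]:
  fixes u :: "(nat \<Rightarrow> nat) \<Rightarrow> real"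
  shows "0 < m \<Longrightarrow> integrable (balls_pmf N m) u"
  by (simp add: finite_set_balls_pmf integrable_measure_pmf_finite)

lemma expectation_hit_exchangeable:
  fixes w :: "nat \<Rightarrow> real"
  assumes "i < N"
  shows "measure_pmf.expectation (balls_pmf N m)
           (\<lambda>f. of_bool (f i = heaviest_bin N m f) * w (max_load N m f))
       = measure_pmf.expectation (balls_pmf N m)
           (\<lambda>f. of_bool (f 0 = heaviest_bin N m f) * w (max_load N m f))"
proof -
  let ?\<pi> = "Transposition.transpose 0 i"
  have \<pi>: "?\<pi> permutes {..<N}"
    using assms by (intro permutes_swap_id) auto
  have "measure_pmf.expectation (balls_pmf N m)
          (\<lambda>f. of_bool (f 0 = heaviest_bin N m f) * w (max_load N m f))
      = measure_pmf.expectation (map_pmf (\<lambda>f. f \<circ> ?\<pi>) (balls_pmf N m))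
          (\<lambda>f. of_bool (f 0 = heaviest_bin N m f) * w (max_load N m f))"
    by (simp only: balls_pmf_permute[OF \<pi>])
  also have "\<dots> = measure_pmf.expectation (balls_pmf N m)
          (\<lambda>f. of_bool ((f \<circ> ?\<pi>) 0 = heaviest_bin N m (f \<circ> ?\<pi>)) * w (max_load N m (f \<circ> ?\<pi>)))"
    by (rule integral_map_pmf)
  also have "\<dots> = measure_pmf.expectation (balls_pmf N m)
          (\<lambda>f. of_bool (f i = heaviest_bin N m f) * w (max_load N m f))"
    by (simp add: heaviest_bin_permute[OF \<pi>] max_load_permute[OF \<pi>])
  finally show ?thesis ..
qed

lemma expectation_hits:
  fixes w :: "nat \<Rightarrow> real"
  assumes "0 < m" "I \<subseteq> {..<N}"
  shows "measure_pmf.expectation (balls_pmf N m)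
           (\<lambda>f. real (card {i\<in>I. f i = heaviest_bin N m f}) * w (max_load N m f))
       = real (card I) * measure_pmf.expectation (balls_pmf N m)
           (\<lambda>f. of_bool (f 0 = heaviest_bin N m f) * w (max_load N m f))"
proof -
  have "finite I" using assms(2) finite_subset by blast
  then have "measure_pmf.expectation (balls_pmf N m)
           (\<lambda>f. real (card {i\<in>I. f i = heaviest_bin N m f}) * w (max_load N m f))
      = measure_pmf.expectation (balls_pmf N m)
           (\<lambda>f. \<Sum>i\<in>I. of_bool (f i = heaviest_bin N m f) * w (max_load N m f))"
    by (simp add: sum_of_bool_eq Int_def flip: sum_distrib_right)
  also have "\<dots> = (\<Sum>i\<in>I. measure_pmf.expectation (balls_pmf N m)
           (\<lambda>f. of_bool (f i = heaviest_bin N m f) * w (max_load N m f)))"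
    using assms(1) by (intro Bochner_Integration.integral_sum) simp
  also have "\<dots> = (\<Sum>i\<in>I. measure_pmf.expectation (balls_pmf N m)
           (\<lambda>f. of_bool (f 0 = heaviest_bin N m f) * w (max_load N m f)))"
    using assms(2) by (intro sum.cong refl expectation_hit_exchangeable) auto
  finally show ?thesis by simp
qed

lemma expectation_late_hits:
  fixes w :: "nat \<Rightarrow> real"
  assumes "0 < m" "N \<le> N'"
  shows "real N' * measure_pmf.expectation (balls_pmf N' m)
           (\<lambda>f. real (late_hits N N' m f) * w (max_load N' m f))
       = real (N' - N) * measure_pmf.expectation (balls_pmf N' m)
           (\<lambda>f. real (max_load N' m f) * w (max_load N' m f))"
proof -
  define c where "c = measure_pmf.expectation (balls_pmf N' m)
           (\<lambda>f. of_bool (f 0 = heaviest_bin N' m f) * w (max_load N' m f))"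
  have "card {i\<in>{..<N'}. f i = heaviest_bin N' m f} = max_load N' m f" for f
    using heaviest_bin(2)[OF assms(1)] unfolding load_def by simp
  then have "measure_pmf.expectation (balls_pmf N' m)
           (\<lambda>f. real (max_load N' m f) * w (max_load N' m f)) = real N' * c"
    using expectation_hits[OF assms(1), of "{..<N'}" N' w] unfolding c_def by simp
  moreover have "measure_pmf.expectation (balls_pmf N' m)
           (\<lambda>f. real (late_hits N N' m f) * w (max_load N' m f)) = real (N' - N) * c"
    using expectation_hits[OF assms(1), of "{N..<N'}" N' w] unfolding late_hits_def c_def
    by (simp add: subset_eq)
  ultimately show ?thesis by simp
qed

lemma max_load_pos:
  assumes "0 < N" "f 0 < m"
  shows "0 < max_load N m f"
proof -
  have "0 < load N f (f 0)"
    unfolding load_def using assms(1) by (auto simp: card_gt_0_iff)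
  also have "\<dots> \<le> max_load N m f" using assms(2) by (rule load_le_max_load)
  finally show ?thesis .
qed

lemma expectation_maxload_pmf_ge_1:
  assumes "0 < N" "0 < m"
  shows "1 \<le> measure_pmf.expectation (maxload_pmf N m) real"
  unfolding maxload_pmf_def integral_map_pmf
proof (rule measure_pmf.integral_ge_const)
  show "AE f in balls_pmf N m. 1 \<le> real (max_load N m f)"
  proof (rule AE_pmfI)
    fix f assume "f \<in> set_pmf (balls_pmf N m)"
    then have "f 0 < m"
      using assms by (auto simp: balls_pmf_def set_Pi_pmf lessThan_empty_iff PiE_dflt_def)
    then show "1 \<le> real (max_load N m f)"
      using max_load_pos[OF assms(1)] by (simp add: Suc_le_eq)
  qed
qed (use assms in simp)

lemma map_pmf_max_load_balls_pmf:
  assumes "N \<le> N'"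
  shows "map_pmf (max_load N m) (balls_pmf N' m) = maxload_pmf N m"
proof -
  have "balls_pmf N m = map_pmf (\<lambda>f i. if i \<in> {..<N} then f i else 0) (balls_pmf N' m)"
    unfolding balls_pmf_def using assms by (intro Pi_pmf_subset) auto
  moreover have "max_load N m (\<lambda>i. if i \<in> {..<N} then f i else 0) = max_load N m f" for f
    unfolding max_load_def by (intro arg_cong[where f = Max] image_cong refl arg_cong[where f = card]) auto
  ultimately show ?thesis
    unfolding maxload_pmf_def by (simp add: map_pmf_comp)
qed

definition maxload_coupling_pmf :: "nat \<Rightarrow> nat \<Rightarrow> nat \<Rightarrow> (nat \<times> nat) pmf" where
  "maxload_coupling_pmf N N' m =
     map_pmf (\<lambda>f. (max_load N' m f, max_load N m f)) (balls_pmf N' m)"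

lemma maxload_coupling_pmf:
  assumes "N \<le> N'" "0 < m"
  shows "map_pmf fst (maxload_coupling_pmf N N' m) = maxload_pmf N' m"
    and "map_pmf snd (maxload_coupling_pmf N N' m) = maxload_pmf N m"
    and "\<forall>(a, b) \<in> set_pmf (maxload_coupling_pmf N N' m). b \<le> a"
  using map_pmf_max_load_balls_pmf[OF assms(1)] max_load_mono[OF assms]
  by (auto simp: maxload_coupling_pmf_def maxload_pmf_def map_pmf_comp)

lemma measure_maxload_coupling_pmf:
  "measure_pmf.prob (maxload_coupling_pmf N N' m) {(a, b). P a b}
     = measure_pmf.prob (balls_pmf N' m) {f. P (max_load N' m f) (max_load N m f)}"
  unfolding maxload_coupling_pmf_def measure_map_pmf by (simp add: vimage_def)

lemma prob_balls_pmf_Markov: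
  fixes u :: "(nat \<Rightarrow> nat) \<Rightarrow> real"
  assumes "0 < m" "0 < c" "\<And>f. 0 \<le> u f"
  shows "measure_pmf.prob (balls_pmf N m) {f. c \<le> u f}
           \<le> measure_pmf.expectation (balls_pmf N m) u / c"
  using integral_Markov_inequality_measure[of "balls_pmf N m" u UNIV c] assms by simp

lemma prob_ge_1_minus:
  assumes "- A \<subseteq> B" "measure_pmf.prob p B \<le> c"
  shows "1 - c \<le> measure_pmf.prob p A"
proof -
  have "measure_pmf.prob p (- A) \<le> measure_pmf.prob p B"
    using assms(1) by (rule measure_pmf.finite_measure_mono) simp
  then show ?thesis
    using assms(2) measure_pmf.prob_compl[of A p] by (simp add: Compl_eq_Diff_UNIV)
qed

lemma expectation_late_hits_le:
  fixes w :: "nat \<Rightarrow> real"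
  assumes "0 < m" "N \<le> N'" "0 < N'" "real (N' - N) \<le> \<epsilon> * real N'" "\<And>k. 0 \<le> w k"
  shows "measure_pmf.expectation (balls_pmf N' m)
           (\<lambda>f. real (late_hits N N' m f) * w (max_load N' m f))
       \<le> \<epsilon> * measure_pmf.expectation (balls_pmf N' m)
           (\<lambda>f. real (max_load N' m f) * w (max_load N' m f))"
proof -
  have "0 \<le> measure_pmf.expectation (balls_pmf N' m)
           (\<lambda>f. real (max_load N' m f) * w (max_load N' m f))"
    using assms(5) by (intro integral_nonneg_AE) simp
  then have "real N' * measure_pmf.expectation (balls_pmf N' m)
           (\<lambda>f. real (late_hits N N' m f) * w (max_load N' m f))
       \<le> real N' * (\<epsilon> * measure_pmf.expectation (balls_pmf N' m)
           (\<lambda>f. real (max_load N' m f) * w (max_load N' m f)))"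
    unfolding expectation_late_hits[OF assms(1,2)] using mult_right_mono[OF assms(4)]
    by (simp add: mult.assoc mult.left_commute)
  then show ?thesis
    using assms(3) by simp
qed

lemma prob_maxload_coupling_close:
  assumes "N \<le> N'" "0 < N" "0 < m" "0 < \<delta>" "real (N' - N) \<le> \<epsilon> * real N'"
  shows "1 - \<epsilon> / \<delta> \<le> measure_pmf.prob (maxload_coupling_pmf N N' m)
           {(a, b). real a - \<delta> * measure_pmf.expectation (maxload_pmf N' m) real \<le> real b}"
proof -
  define E where "E = measure_pmf.expectation (maxload_pmf N' m) real"
  have "1 \<le> E"
    unfolding E_def using assms by (intro expectation_maxload_pmf_ge_1) auto
  have late: "measure_pmf.expectation (balls_pmf N' m) (\<lambda>f. real (late_hits N N' m f)) \<le> \<epsilon> * E"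
    using expectation_late_hits_le[OF assms(3,1) _ assms(5), of "\<lambda>_. 1"] assms(1,2)
    by (simp add: E_def maxload_pmf_def)
  show ?thesis
    unfolding measure_maxload_coupling_pmf E_def[symmetric]
  proof (rule prob_ge_1_minus)
    show "- {f. real (max_load N' m f) - \<delta> * E \<le> real (max_load N m f)}
            \<subseteq> {f. \<delta> * E \<le> real (late_hits N N' m f)}"
    proof
      fix f
      assume "f \<in> - {f. real (max_load N' m f) - \<delta> * E \<le> real (max_load N m f)}"
      moreover have "real (max_load N' m f) \<le> real (max_load N m f) + real (late_hits N N' m f)"
        using max_load_le_add_late_hits[OF assms(1,3)] by (simp flip: of_nat_add)
      ultimately show "f \<in> {f. \<delta> * E \<le> real (late_hits N N' m f)}" by simp
    qed
    have "measure_pmf.prob (balls_pmf N' m) {f. \<delta> * E \<le> real (late_hits N N' m f)}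
        \<le> measure_pmf.expectation (balls_pmf N' m) (\<lambda>f. real (late_hits N N' m f)) / (\<delta> * E)"
      using assms \<open>1 \<le> E\<close> by (intro prob_balls_pmf_Markov) auto
    also have "\<dots> \<le> \<epsilon> * E / (\<delta> * E)"
      using late assms(4) \<open>1 \<le> E\<close> by (intro divide_right_mono) auto
    also have "\<dots> = \<epsilon> / \<delta>"
      using \<open>1 \<le> E\<close> by simp
    finally show "measure_pmf.prob (balls_pmf N' m) {f. \<delta> * E \<le> real (late_hits N N' m f)}
        \<le> \<epsilon> / \<delta>" .
  qed
qed

lemma prob_maxload_coupling_eq:
  assumes "N \<le> N'" "0 < N" "0 < m" "0 < \<delta>" "real (N' - N) \<le> \<epsilon> * real N'"
  shows "1 - measure_pmf.prob (maxload_coupling_pmf N N' m) {(a, b). real a > 1 / \<delta>} - \<epsilon> / \<delta>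
           \<le> measure_pmf.prob (maxload_coupling_pmf N N' m) {(a, b). a = b}"
proof -
  define w :: "nat \<Rightarrow> real" where "w x = of_bool (real x \<le> 1 / \<delta>)" for x
  let ?large = "{f. real (max_load N' m f) > 1 / \<delta>}"
  let ?hit = "{f. 1 \<le> real (late_hits N N' m f) * w (max_load N' m f)}"
  have "0 \<le> \<epsilon> * real N'"
    using assms(5) by (rule order.trans[OF of_nat_0_le_iff])
  then have "0 \<le> \<epsilon>"
    using assms(1,2) by (simp add: zero_le_mult_iff)
  have "measure_pmf.prob (balls_pmf N' m) ?hit
      \<le> measure_pmf.expectation (balls_pmf N' m)
          (\<lambda>f. real (late_hits N N' m f) * w (max_load N' m f)) / 1"
    using assms(3) by (intro prob_balls_pmf_Markov) (auto simp: w_def)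
  also have "\<dots> \<le> \<epsilon> * measure_pmf.expectation (balls_pmf N' m)
          (\<lambda>f. real (max_load N' m f) * w (max_load N' m f))"
    using expectation_late_hits_le[OF assms(3,1) _ assms(5), of w] assms(1,2) by (simp add: w_def)
  also have "\<dots> \<le> \<epsilon> * (1 / \<delta>)"
    using assms(3,4) \<open>0 \<le> \<epsilon>\<close>
    by (intro mult_left_mono measure_pmf.integral_le_const) (auto simp: w_def)
  finally have "measure_pmf.prob (balls_pmf N' m) ?hit \<le> \<epsilon> / \<delta>"
    by simp
  moreover have "measure_pmf.prob (balls_pmf N' m) (?large \<union> ?hit)
      \<le> measure_pmf.prob (balls_pmf N' m) ?large + measure_pmf.prob (balls_pmf N' m) ?hit"
    by (rule measure_Un_le) simp_all
  moreover have "- {f. max_load N' m f = max_load N m f} \<subseteq> ?large \<union> ?hit"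
  proof
    fix f
    assume "f \<in> - {f. max_load N' m f = max_load N m f}"
    then have "1 \<le> late_hits N N' m f"
      using max_load_le_add_late_hits[OF assms(1,3), of f] max_load_mono[OF assms(1,3), of f] by simp
    then show "f \<in> ?large \<union> ?hit" by (auto simp: w_def)
  qed
  ultimately show ?thesis
    unfolding measure_maxload_coupling_pmf
    using prob_ge_1_minus[of "{f. max_load N' m f = max_load N m f}" "?large \<union> ?hit"] by fastforce
qed

lemma floor_scaled_bounds:
  fixes \<epsilon> :: real
  assumes "0 \<le> \<epsilon>"
  shows "N \<le> nat \<lfloor>real N * (1 + \<epsilon>)\<rfloor>"
    and "real (nat \<lfloor>real N * (1 + \<epsilon>)\<rfloor> - N) \<le> \<epsilon> * real (nat \<lfloor>real N * (1 + \<epsilon>)\<rfloor>)"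
proof -
  let ?N' = "nat \<lfloor>real N * (1 + \<epsilon>)\<rfloor>"
  have "real N \<le> real N * (1 + \<epsilon>)" using assms by (simp add: algebra_simps)
  then show le: "N \<le> ?N'" by (simp add: le_nat_floor)
  have "real ?N' \<le> real N + real N * \<epsilon>" using assms by (simp add: algebra_simps)
  then have "real (?N' - N) \<le> real N * \<epsilon>" using of_nat_diff[OF le, where 'a = real] by linarith
  also have "\<dots> \<le> real ?N' * \<epsilon>" by (rule mult_right_mono[OF of_nat_mono[OF le] assms])
  finally show "real (?N' - N) \<le> \<epsilon> * real ?N'" by (simp add: mult.commute)
qed

lemma tendsto_prob_1:
  fixes e :: "nat \<Rightarrow> real"
  assumes "\<And>n. 1 - e n \<le> measure_pmf.prob (p n) (A n)" and "e \<longlonglongrightarrow> 0"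
  shows "(\<lambda>n. measure_pmf.prob (p n) (A n)) \<longlonglongrightarrow> 1"
proof (rule tendsto_sandwich[of "\<lambda>n. 1 - e n" _ _ "\<lambda>_. 1"])
  show "(\<lambda>n. 1 - e n) \<longlonglongrightarrow> 1"
    using tendsto_diff[OF tendsto_const assms(2), of 1] by simp
qed (auto intro: always_eventually assms(1) measure_pmf.prob_le_1)

theorem mainTheorem18:
  fixes N m :: "nat \<Rightarrow> nat" and \<delta> \<epsilon> :: "nat \<Rightarrow> real"
  assumes "\<forall>n. N n > 0" and "\<forall>n. m n > 0"
    and "filterlim N at_top sequentially" and "filterlim m at_top sequentially"
    and "\<forall>n. \<delta> n > 0" and "\<forall>n. \<epsilon> n > 0"
    and "\<delta> \<longlonglongrightarrow> 0" and "\<epsilon> \<longlonglongrightarrow> 0"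
    and "\<epsilon> \<in> o(\<delta>)"
  shows "\<exists>p :: nat \<Rightarrow> (nat \<times> nat) pmf.
    (\<forall>n. map_pmf fst (p n) = maxload_pmf (nat \<lfloor>real (N n) * (1 + \<epsilon> n)\<rfloor>) (m n)
        \<and> map_pmf snd (p n) = maxload_pmf (N n) (m n)
        \<and> (\<forall>(a, b) \<in> set_pmf (p n). b \<le> a))
    \<and> ((\<lambda>n. measure_pmf.prob (p n)
          {(a, b). real a - \<delta> n * measure_pmf.expectation
              (maxload_pmf (nat \<lfloor>real (N n) * (1 + \<epsilon> n)\<rfloor>) (m n)) real \<le> real b})
        \<longlonglongrightarrow> 1)
    \<and> (((\<lambda>n. measure_pmf.prob (p n) {(a, b). real a > 1 / \<delta> n}) \<longlonglongrightarrow> 0)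
        \<longrightarrow> ((\<lambda>n. measure_pmf.prob (p n) {(a, b). a = b}) \<longlonglongrightarrow> 1))"
proof -
  define N' where "N' n = nat \<lfloor>real (N n) * (1 + \<epsilon> n)\<rfloor>" for n
  define p where "p n = maxload_coupling_pmf (N n) (N' n) (m n)" for n
  have N_le: "N n \<le> N' n" and late_fraction: "real (N' n - N n) \<le> \<epsilon> n * real (N' n)" for n
    unfolding N'_def using assms(6) by (intro floor_scaled_bounds less_imp_le; simp)+
  have ratio: "(\<lambda>n. \<epsilon> n / \<delta> n) \<longlonglongrightarrow> 0"
    using smalloD_tendsto[OF assms(9)] by simp
  have pos: "0 < N n" "0 < m n" "0 < \<delta> n" for n
    using assms by auto
  have close: "1 - \<epsilon> n / \<delta> n \<le> measure_pmf.prob (p n) {(a, b). real a - \<delta> n *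
          measure_pmf.expectation (maxload_pmf (N' n) (m n)) real \<le> real b}" for n
    unfolding p_def by (rule prob_maxload_coupling_close[OF N_le[of n] pos[of n] late_fraction[of n]])
  have equal: "1 - (measure_pmf.prob (p n) {(a, b). real a > 1 / \<delta> n} + \<epsilon> n / \<delta> n)
                 \<le> measure_pmf.prob (p n) {(a, b). a = b}" for n
    using prob_maxload_coupling_eq[OF N_le[of n] pos[of n] late_fraction[of n]] unfolding p_def by simp
  have "(\<lambda>n. measure_pmf.prob (p n) {(a, b). real a - \<delta> n *
          measure_pmf.expectation (maxload_pmf (N' n) (m n)) real \<le> real b}) \<longlonglongrightarrow> 1"
    using close ratio by (rule tendsto_prob_1)
  moreover have "(\<lambda>n. measure_pmf.prob (p n) {(a, b). a = b}) \<longlonglongrightarrow> 1"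
    if "(\<lambda>n. measure_pmf.prob (p n) {(a, b). real a > 1 / \<delta> n}) \<longlonglongrightarrow> 0"
    using equal tendsto_add_zero[OF that ratio] by (rule tendsto_prob_1)
  moreover have "map_pmf fst (p n) = maxload_pmf (N' n) (m n)"
    and "map_pmf snd (p n) = maxload_pmf (N n) (m n)"
    and "\<forall>(a, b) \<in> set_pmf (p n). b \<le> a" for n
    unfolding p_def using maxload_coupling_pmf[OF N_le[of n], of "m n"] assms(2) by auto
  ultimately show ?thesis
    unfolding N'_def by (intro exI[of _ p] conjI impI allI)
qed

end
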